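(* Let $\mu$ be a log-concave probability measure on $\mathbb{R}^n$. Then for every $\varepsilon\in(0,1)$ and every $x\in\mathbb{R}^n$, \[ \Lambda_\mu^\ast(x)\geqslant (1-\varepsilon)\log\frac{1}{q_\mu(x)}+\log\frac{\varepsilon}{2^{1-\varepsilon}} \] (with the convention $\log(1/0)=+\infty$).
   Context: For a probability measure $\mu$ on $\mathbb{R}^n$ and a random vector $X\sim\mu$: the half-space (Tukey) depth is $q_\mu(x)=\inf\{\mu(H): H \text{ a closed half-space containing } x\}=\inf_{\xi\in S^{n-1}}\mathbb{P}(\langle X,\xi\rangle\geqslant\langle x,\xi\rangle)$; the cumulant generating function is $\Lambda_\mu(\xi)=\log\mathbb{E}e^{\langle X,\xi\rangle}$ (possibly $+\infty$); the Cramér transform is its Legendre transform $\Lambda_\mu^\ast(x)=\sup_{\xi\in\mathbb{R}^n}\big(\langle x,\xi\rangle-\Lambda_\mu(\xi)\big)\in[0,+\infty]$. A Borel measure $\mu$ is log-concave if $\mu((1-\lambda)A+\lambda B)\geqslant\mu(A)^{1-\lambda}\mu(B)^\lambda$ for all Borel $A,B$ and $\lambda\in(0,1)$. *)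

theory Defs
  imports "HOL-Analysis.Analysis" "HOL-Probability.Probability"
begin

text \<open>Log-concavity of a Borel measure. The Minkowski combination of two Borel sets is
analytic, hence universally measurable but not necessarily Borel; we therefore measure it
with the completion of M.\<close>
definition log_concave_measure :: "'a::euclidean_space measure \<Rightarrow> bool" where
  "log_concave_measure M \<longleftrightarrow>
     (\<forall>A B l. A \<in> sets borel \<longrightarrow> B \<in> sets borel \<longrightarrow> 0 < l \<longrightarrow> l < 1 \<longrightarrow>
        measure (completion M) {(1 - l) *\<^sub>R a + l *\<^sub>R b | a b. a \<in> A \<and> b \<in> B}
          \<ge> measure M A powr (1 - l) * measure M B powr l)"

definition tukey_depth :: "'a::euclidean_space measure \<Rightarrow> 'a \<Rightarrow> real" where
  "tukey_depth M x = (INF \<xi>\<in>sphere 0 1. measure M {y. \<xi> \<bullet> y \<ge> \<xi> \<bullet> x})"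

definition cgf :: "'a::euclidean_space measure \<Rightarrow> 'a \<Rightarrow> ereal" where
  "cgf M \<xi> = (let I = (\<integral>\<^sup>+ y. ennreal (exp (\<xi> \<bullet> y)) \<partial>M)
               in if I = \<infinity> then \<infinity> else ereal (ln (enn2real I)))"

definition cramer :: "'a::euclidean_space measure \<Rightarrow> 'a \<Rightarrow> ereal" where
  "cramer M x = (SUP \<xi>. ereal (x \<bullet> \<xi>) - cgf M \<xi>)"

end

theory Submission
  imports Defs
begin

text \<open>Fix a direction \<open>u\<close> and let \<open>F(t) = \<mu>{y. t \<le> u \<bullet> y - u \<bullet> x}\<close>. Since \<open>\<mu>\<close> is
  log-concave, so is \<open>F\<close>, and \<open>ln F\<close> lies below each of its secants outside the secant's interval.
  The secant through \<open>0\<close> and a point \<open>-s < 0\<close> close to \<open>0\<close> (using left-continuity of \<open>F\<close>) yields,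
  for any \<open>c > F(0)\<close>, an exponential tail bound \<open>F(t) \<le> c exp(-a t)\<close> with \<open>a > 0\<close>. Integrating
  \<open>exp(\<lambda> t)\<close> against this tail with \<open>\<lambda> = (1 - \<epsilon>) a\<close> bounds the exponential moment of
  \<open>u \<bullet> y - u \<bullet> x\<close> by \<open>c\<^sup>1\<^sup>-\<^sup>\<epsilon> / \<epsilon>\<close>, hence \<open>\<Lambda>\<^sup>*(x) \<ge> (1 - \<epsilon>) ln (1/c) + ln \<epsilon>\<close>.
  Letting \<open>c\<close> decrease to the depth over all directions proves the bound even without the
  factor \<open>2\<^sup>1\<^sup>-\<^sup>\<epsilon>\<close>.\<close>

section \<open>Exponential moments from exponential tails\<close>

lemma nn_integral_exp_neg_atLeast:
  fixes b y :: real
  assumes "0 < b"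
  shows "(\<integral>\<^sup>+ t. ennreal (exp (- (b * t))) * indicator {y..} t \<partial>lborel) = ennreal (exp (- (b * y)) / b)"
proof -
  have "(\<integral>\<^sup>+ t. ennreal (exp (- (b * t))) * indicator {y..} t \<partial>lborel) = ennreal (0 - (- exp (- (b * y)) / b))"
  proof (rule nn_integral_FTC_atLeast)
    show "DERIV (\<lambda>t. - exp (- (b * t)) / b) t :> exp (- (b * t))" for t
      using assms by (auto intro!: derivative_eq_intros)
    show "((\<lambda>t. - exp (- (b * t)) / b) \<longlongrightarrow> 0) at_top"
      using assms by real_asymp
  qed auto
  then show ?thesis by simp
qed

lemma nn_integral_exp_atMost:
  fixes l y :: real
  assumes "0 < l"
  shows "(\<integral>\<^sup>+ t. ennreal (exp (l * t)) * indicator {..y} t \<partial>lborel) = ennreal (exp (l * y) / l)"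
proof -
  have "(\<integral>\<^sup>+ t. ennreal (exp (l * t)) * indicator {..y} t \<partial>lborel)
      = ennreal \<bar>-1\<bar> * (\<integral>\<^sup>+ t. ennreal (exp (l * (0 + -1 * t))) * indicator {..y} (0 + -1 * t) \<partial>lborel)"
    by (rule nn_integral_real_affine) auto
  also have "\<dots> = (\<integral>\<^sup>+ t. ennreal (exp (- l * t)) * indicator {-y..} t \<partial>lborel)"
    by (auto intro!: nn_integral_cong split: split_indicator)
  finally show ?thesis
    using nn_integral_exp_neg_atLeast [OF assms] by simp
qed

lemma nn_integral_exp_eq_tail:
  assumes "sigma_finite_measure M" and [measurable]: "Y \<in> borel_measurable M" and "0 < l"
  shows "(\<integral>\<^sup>+ \<omega>. ennreal (exp (l * Y \<omega>)) \<partial>M)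
     = (\<integral>\<^sup>+ t. ennreal (l * exp (l * t)) * emeasure M {\<omega>\<in>space M. t \<le> Y \<omega>} \<partial>lborel)"
proof -
  interpret pair_sigma_finite lborel M
    using assms(1) by (simp add: pair_sigma_finite.intro lborel.sigma_finite_measure_axioms)
  have "(\<integral>\<^sup>+ \<omega>. ennreal (exp (l * Y \<omega>)) \<partial>M)
     = (\<integral>\<^sup>+ \<omega>. (\<integral>\<^sup>+ t. ennreal (l * exp (l * t)) * indicator {..Y \<omega>} t \<partial>lborel) \<partial>M)"
  proof (intro nn_integral_cong)
    fix \<omega>
    have "(\<integral>\<^sup>+ t. ennreal (l * exp (l * t)) * indicator {..Y \<omega>} t \<partial>lborel)
        = ennreal l * (\<integral>\<^sup>+ t. ennreal (exp (l * t)) * indicator {..Y \<omega>} t \<partial>lborel)"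
      using \<open>0 < l\<close> by (simp add: ennreal_mult mult.assoc flip: nn_integral_cmult)
    also have "\<dots> = ennreal (exp (l * Y \<omega>))"
      using \<open>0 < l\<close> by (simp add: nn_integral_exp_atMost flip: ennreal_mult)
    finally show "ennreal (exp (l * Y \<omega>))
        = (\<integral>\<^sup>+ t. ennreal (l * exp (l * t)) * indicator {..Y \<omega>} t \<partial>lborel)" ..
  qed
  also have "\<dots> = (\<integral>\<^sup>+ t. (\<integral>\<^sup>+ \<omega>. ennreal (l * exp (l * t)) * indicator {..Y \<omega>} t \<partial>M) \<partial>lborel)"
  proof (rule Fubini')
    have "(\<lambda>(t, \<omega>). ennreal (l * exp (l * t)) * indicator {(t, \<omega>). t \<le> Y \<omega>} (t, \<omega>))
        \<in> borel_measurable (lborel \<Otimes>\<^sub>M M)"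
      by measurable
    then show "(\<lambda>(t, \<omega>). ennreal (l * exp (l * t)) * indicator {..Y \<omega>} t) \<in> borel_measurable (lborel \<Otimes>\<^sub>M M)"
      by (simp add: indicator_def)
  qed
  also have "\<dots> = (\<integral>\<^sup>+ t. ennreal (l * exp (l * t)) * emeasure M {\<omega>\<in>space M. t \<le> Y \<omega>} \<partial>lborel)"
  proof (intro nn_integral_cong)
    fix t
    have "(\<integral>\<^sup>+ \<omega>. ennreal (l * exp (l * t)) * indicator {..Y \<omega>} t \<partial>M)
        = (\<integral>\<^sup>+ \<omega>. ennreal (l * exp (l * t)) * indicator {\<omega>\<in>space M. t \<le> Y \<omega>} \<omega> \<partial>M)"
      by (intro nn_integral_cong) (auto split: split_indicator)
    then show "(\<integral>\<^sup>+ \<omega>. ennreal (l * exp (l * t)) * indicator {..Y \<omega>} t \<partial>M)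
        = ennreal (l * exp (l * t)) * emeasure M {\<omega>\<in>space M. t \<le> Y \<omega>}"
      by (simp add: nn_integral_cmult_indicator)
  qed
  finally show ?thesis .
qed

lemma mgf_le_of_tail_le_exp:
  assumes "prob_space M" and [measurable]: "Y \<in> borel_measurable M"
    and "0 < a" "0 < c" "0 < \<epsilon>" "\<epsilon> < 1"
    and tail: "\<And>t. measure M {\<omega>\<in>space M. t \<le> Y \<omega>} \<le> c * exp (- a * t)"
  shows "(\<integral>\<^sup>+ \<omega>. ennreal (exp ((1 - \<epsilon>) * a * Y \<omega>)) \<partial>M) \<le> ennreal (c powr (1 - \<epsilon>) / \<epsilon>)"
proof -
  interpret prob_space M by fact
  define l where "l = (1 - \<epsilon>) * a"
  define b where "b = \<epsilon> * a"
  define t0 where "t0 = ln c / a"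
  have "0 < l" "0 < b" using assms by (simp_all add: l_def b_def)
  have exp_t0: "exp (l * t0) = c powr (1 - \<epsilon>)" "c * exp (- b * t0) = c powr (1 - \<epsilon>)"
  proof -
    have "l * t0 = (1 - \<epsilon>) * ln c" "ln c + - b * t0 = (1 - \<epsilon>) * ln c"
      using \<open>0 < a\<close> by (simp_all add: l_def b_def t0_def algebra_simps)
    moreover have "c * exp (- b * t0) = exp (ln c + - b * t0)"
      using \<open>0 < c\<close> by (simp add: exp_diff exp_minus field_simps)
    ultimately show "exp (l * t0) = c powr (1 - \<epsilon>)" "c * exp (- b * t0) = c powr (1 - \<epsilon>)"
      using \<open>0 < c\<close> by (simp_all only: powr_def) simp_all
  qed
  \<comment> \<open>\<open>c exp (- a t)\<close> crosses \<open>1\<close> at \<open>t0\<close>; to the left of it the trivial tail bound is better.\<close>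
  have pointwise: "ennreal (l * exp (l * t)) * emeasure M {\<omega>\<in>space M. t \<le> Y \<omega>}
      \<le> ennreal l * (ennreal (exp (l * t)) * indicator {..t0} t + ennreal (c * exp (- b * t)) * indicator {t0..} t)"
    for t
  proof (cases "t \<le> t0")
    case True
    have "ennreal (l * exp (l * t)) * emeasure M {\<omega>\<in>space M. t \<le> Y \<omega>} \<le> ennreal (l * exp (l * t)) * 1"
      by (intro mult_left_mono emeasure_le_1) auto
    also have "\<dots> \<le> ennreal l * (ennreal (exp (l * t)) * indicator {..t0} t
        + ennreal (c * exp (- b * t)) * indicator {t0..} t)"
      using True \<open>0 < l\<close> by (auto simp: ennreal_mult intro!: mult_left_mono add_increasing2)
    finally show ?thesis .
  next
    case False
    have "l * exp (l * t) * measure M {\<omega>\<in>space M. t \<le> Y \<omega>} \<le> l * exp (l * t) * (c * exp (- a * t))"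
      using \<open>0 < l\<close> tail by (intro mult_left_mono) auto
    also have "\<dots> = l * (c * exp (- b * t))"
      by (simp add: l_def b_def mult_exp_exp algebra_simps)
    finally have "ennreal (l * exp (l * t) * measure M {\<omega>\<in>space M. t \<le> Y \<omega>})
        \<le> ennreal (l * (c * exp (- b * t)))"
      by (rule ennreal_leI)
    then show ?thesis
      using False \<open>0 < l\<close> \<open>0 < c\<close> by (simp add: emeasure_eq_measure ennreal_mult)
  qed
  have "(\<integral>\<^sup>+ \<omega>. ennreal (exp (l * Y \<omega>)) \<partial>M)
      = (\<integral>\<^sup>+ t. ennreal (l * exp (l * t)) * emeasure M {\<omega>\<in>space M. t \<le> Y \<omega>} \<partial>lborel)"
    using \<open>0 < l\<close> by (intro nn_integral_exp_eq_tail) (auto intro: sigma_finite_measure_axioms)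
  also have "\<dots> \<le> (\<integral>\<^sup>+ t. ennreal l * (ennreal (exp (l * t)) * indicator {..t0} t
      + ennreal (c * exp (- b * t)) * indicator {t0..} t) \<partial>lborel)"
    by (intro nn_integral_mono pointwise)
  also have "\<dots> = ennreal l * ((\<integral>\<^sup>+ t. ennreal (exp (l * t)) * indicator {..t0} t \<partial>lborel)
      + ennreal c * (\<integral>\<^sup>+ t. ennreal (exp (- b * t)) * indicator {t0..} t \<partial>lborel))"
    using \<open>0 < c\<close> by (simp add: nn_integral_cmult nn_integral_add ennreal_mult mult.assoc)
  also have "\<dots> = ennreal (l * (exp (l * t0) / l + c * (exp (- b * t0) / b)))"
    using \<open>0 < l\<close> \<open>0 < b\<close> \<open>0 < c\<close>
    by (simp add: nn_integral_exp_atMost nn_integral_exp_neg_atLeast flip: ennreal_mult ennreal_plus)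
  also have "l * (exp (l * t0) / l + c * (exp (- b * t0) / b)) = exp (l * t0) + l / b * (c * exp (- b * t0))"
    using \<open>0 < l\<close> by (simp add: field_simps)
  also have "\<dots> = c powr (1 - \<epsilon>) / \<epsilon>"
    unfolding exp_t0 using \<open>0 < a\<close> assms(5,6) by (simp add: l_def b_def field_simps)
  finally show ?thesis by (simp add: l_def mult.assoc)
qed

section \<open>Log-concave functions on the real line\<close>

definition log_concave_function :: "(real \<Rightarrow> real) \<Rightarrow> bool" where
  "log_concave_function F \<longleftrightarrow>
     (\<forall>a b l. 0 < l \<longrightarrow> l < 1 \<longrightarrow> F a powr (1 - l) * F b powr l \<le> F ((1 - l) * a + l * b))"

lemma log_concave_functionD_ln:
  assumes "log_concave_function F" "0 < F a" "0 < F b" "0 < l" "l < 1"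
  shows "(1 - l) * ln (F a) + l * ln (F b) \<le> ln (F ((1 - l) * a + l * b))"
proof -
  have "0 < F a powr (1 - l) * F b powr l"
    using assms by simp
  moreover have "F a powr (1 - l) * F b powr l \<le> F ((1 - l) * a + l * b)"
    using assms unfolding log_concave_function_def by blast
  ultimately have "ln (F a powr (1 - l) * F b powr l) \<le> ln (F ((1 - l) * a + l * b))"
    by simp
  then show ?thesis
    using assms by (simp add: ln_mult ln_powr)
qed

lemma log_concave_function_reflect:
  assumes "log_concave_function F"
  shows "log_concave_function (\<lambda>t. F (- t))"
  unfolding log_concave_function_def
proof (intro allI impI)
  fix a b l :: real assume "0 < l" "l < 1"
  then have "F (- a) powr (1 - l) * F (- b) powr l \<le> F ((1 - l) * - a + l * - b)"
    using assms unfolding log_concave_function_def by blast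
  then show "F (- a) powr (1 - l) * F (- b) powr l \<le> F (- ((1 - l) * a + l * b))"
    by (simp add: algebra_simps)
qed

text \<open>The exponent is the secant of \<open>ln F\<close> through \<open>r\<close> and \<open>s\<close>, evaluated at \<open>t\<close>.\<close>

lemma log_concave_function_le_secant_right:
  assumes F: "log_concave_function F" and "r < s" "s < t" "0 < F r" "0 < F s"
  shows "F t \<le> exp (ln (F s) + (t - s) * (ln (F s) - ln (F r)) / (s - r))"
proof (cases "F t \<le> 0")
  case False
  define \<theta> where "\<theta> = (s - r) / (t - r)"
  have "0 < \<theta>" "\<theta> < 1"
    using assms by (simp_all add: \<theta>_def)
  have "\<theta> * (t - r) = s - r"
    using assms by (simp add: \<theta>_def)
  then have "(1 - \<theta>) * r + \<theta> * t = s"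
    by (simp add: algebra_simps)
  then have "(1 - \<theta>) * ln (F r) + \<theta> * ln (F t) \<le> ln (F s)"
    using log_concave_functionD_ln [OF F \<open>0 < F r\<close>, of t \<theta>] False \<open>0 < \<theta>\<close> \<open>\<theta> < 1\<close> by simp
  then have "(t - r) * ((1 - \<theta>) * ln (F r) + \<theta> * ln (F t)) \<le> (t - r) * ln (F s)"
    using assms by (intro mult_left_mono) auto
  also have "(t - r) * ((1 - \<theta>) * ln (F r) + \<theta> * ln (F t))
      = (t - r) * ln (F r) + \<theta> * (t - r) * (ln (F t) - ln (F r))"
    by (simp add: algebra_simps)
  finally have "(s - r) * ln (F t) \<le> (s - r) * ln (F s) + (t - s) * (ln (F s) - ln (F r))"
    unfolding \<open>\<theta> * (t - r) = s - r\<close> by (simp add: algebra_simps)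
  then have "ln (F t) \<le> ln (F s) + (t - s) * (ln (F s) - ln (F r)) / (s - r)"
    using assms by (simp add: field_simps)
  then show ?thesis
    using False by (metis exp_le_cancel_iff exp_ln not_le)
qed (simp add: order_trans [OF _ less_imp_le [OF exp_gt_zero]])

lemma log_concave_function_le_secant:
  assumes F: "log_concave_function F" and "r < s" "0 < F r" "0 < F s" "t \<notin> {r<..<s}"
  shows "F t \<le> exp (ln (F s) + (t - s) * (ln (F s) - ln (F r)) / (s - r))"
proof -
  consider "t = r" | "t = s" | "s < t" | "t < r"
    using assms(5) by fastforce
  then show ?thesis
  proof cases
    case 1
    have "(t - s) * (ln (F s) - ln (F r)) / (s - r) = ln (F r) - ln (F s)"
      using 1 assms by (simp add: field_simps)
    then show ?thesis
      using 1 assms by simp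
  next
    case 4
    have "F (- (- t)) \<le> exp (ln (F (- (- r))) + (- t - - r) * (ln (F (- (- r))) - ln (F (- (- s)))) / (- r - - s))"
      using log_concave_function_le_secant_right [OF log_concave_function_reflect [OF F], of "- s" "- r" "- t"]
        4 assms by simp
    also have "ln (F (- (- r))) + (- t - - r) * (ln (F (- (- r))) - ln (F (- (- s)))) / (- r - - s)
        = ln (F s) + (t - s) * (ln (F s) - ln (F r)) / (s - r)"
      using assms by (simp add: field_simps)
    finally show ?thesis by simp
  qed (use assms log_concave_function_le_secant_right in auto)
qed

section \<open>Tail probabilities\<close>

lemma (in prob_space) tail_prob_tendsto_at_bot:
  fixes Y :: "'a \<Rightarrow> real"
  assumes [measurable]: "Y \<in> borel_measurable M"
  shows "((\<lambda>t. prob {\<omega>\<in>space M. t \<le> Y \<omega>}) \<longlongrightarrow> 1) at_bot"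
proof (rule tendsto_sandwich [where h = "\<lambda>_. 1"])
  interpret D: real_distribution "distr M borel Y"
    by simp
  show "((\<lambda>t. 1 - cdf (distr M borel Y) t) \<longlongrightarrow> 1) at_bot"
    using tendsto_diff [OF tendsto_const D.cdf_lim_at_bot, of 1] by simp
  have "1 - cdf (distr M borel Y) t \<le> prob {\<omega>\<in>space M. t \<le> Y \<omega>}" for t
  proof -
    have "prob {\<omega>\<in>space M. t \<le> Y \<omega>} = 1 - prob {\<omega>\<in>space M. Y \<omega> < t}"
    proof -
      have "space M - {\<omega>\<in>space M. Y \<omega> < t} = {\<omega>\<in>space M. t \<le> Y \<omega>}"
        by auto
      then show ?thesis
        using prob_compl [of "{\<omega>\<in>space M. Y \<omega> < t}"] by simp
    qed
    moreover have "prob {\<omega>\<in>space M. Y \<omega> < t} \<le> prob {\<omega>\<in>space M. Y \<omega> \<le> t}"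
      by (intro finite_measure_mono) auto
    moreover have "prob {\<omega>\<in>space M. Y \<omega> \<le> t} = cdf (distr M borel Y) t"
      unfolding cdf_def by (subst measure_distr) (auto intro!: arg_cong [where f = prob])
    ultimately show ?thesis by simp
  qed
  then show "eventually (\<lambda>t. 1 - cdf (distr M borel Y) t \<le> prob {\<omega>\<in>space M. t \<le> Y \<omega>}) at_bot"
    by simp
qed simp_all

lemma (in finite_measure) tail_measure_tendsto_at_left:
  fixes Y :: "'a \<Rightarrow> real"
  assumes [measurable]: "Y \<in> borel_measurable M"
  shows "((\<lambda>t. measure M {\<omega>\<in>space M. t \<le> Y \<omega>}) \<longlongrightarrow> measure M {\<omega>\<in>space M. t0 \<le> Y \<omega>}) (at_left t0)"
proof (rule tendsto_at_left_sequentially [of "t0 - 1"])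
  fix S :: "nat \<Rightarrow> real"
  assume S: "\<And>n. S n < t0" "incseq S" "S \<longlonglongrightarrow> t0"
  have "decseq (\<lambda>n. {\<omega>\<in>space M. S n \<le> Y \<omega>})"
  proof (rule decseq_SucI)
    fix n
    show "{\<omega>\<in>space M. S (Suc n) \<le> Y \<omega>} \<subseteq> {\<omega>\<in>space M. S n \<le> Y \<omega>}"
      using incseq_SucD [OF S(2), of n] by auto
  qed
  then have "(\<lambda>n. measure M {\<omega>\<in>space M. S n \<le> Y \<omega>}) \<longlonglongrightarrow> measure M (\<Inter>n. {\<omega>\<in>space M. S n \<le> Y \<omega>})"
    by (intro finite_Lim_measure_decseq) auto
  also have "(\<Inter>n. {\<omega>\<in>space M. S n \<le> Y \<omega>}) = {\<omega>\<in>space M. t0 \<le> Y \<omega>}"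
  proof (intro equalityI subsetI)
    fix \<omega> assume "\<omega> \<in> (\<Inter>n. {\<omega>\<in>space M. S n \<le> Y \<omega>})"
    then show "\<omega> \<in> {\<omega>\<in>space M. t0 \<le> Y \<omega>}"
      using LIMSEQ_le_const2 [OF S(3), of "Y \<omega>"] by auto
  qed (use S(1) less_imp_le order_trans in blast)
  finally show "(\<lambda>n. measure M {\<omega>\<in>space M. S n \<le> Y \<omega>}) \<longlonglongrightarrow> measure M {\<omega>\<in>space M. t0 \<le> Y \<omega>}" .
qed simp

context prob_space
begin

lemma tail_prob_antimono:
  fixes Y :: "'a \<Rightarrow> real"
  assumes [measurable]: "Y \<in> borel_measurable M" and "s \<le> t"
  shows "prob {\<omega>\<in>space M. t \<le> Y \<omega>} \<le> prob {\<omega>\<in>space M. s \<le> Y \<omega>}"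
  using \<open>s \<le> t\<close> by (intro finite_measure_mono) auto

lemma tail_prob_le_exp_of_null:
  fixes Y :: "'a \<Rightarrow> real"
  assumes [measurable]: "Y \<in> borel_measurable M"
    and null: "prob {\<omega>\<in>space M. 0 \<le> Y \<omega>} = 0" and "0 < c" "c \<le> 1"
  shows "\<exists>a>0. \<forall>t. prob {\<omega>\<in>space M. t \<le> Y \<omega>} \<le> c * exp (- a * t)"
proof -
  let ?F = "\<lambda>t. prob {\<omega>\<in>space M. t \<le> Y \<omega>}"
  have "eventually (\<lambda>t. ?F t < c) (at_left 0)"
    using order_tendstoD(2) [OF tail_measure_tendsto_at_left [OF assms(1), of 0], of c] null \<open>0 < c\<close>
    by simp
  moreover have "eventually (\<lambda>t. t \<in> {-1<..<0}) (at_left (0::real))"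
    by (rule eventually_at_left_real) simp
  ultimately obtain r where r: "?F r < c" "r < 0"
    using eventually_happens' [OF trivial_limit_at_left_real eventually_conj] by fastforce
  define a where "a = (1 - ln c) / - r"
  have "ln c \<le> 0"
    using \<open>0 < c\<close> \<open>c \<le> 1\<close> by simp
  then have "0 < a"
    using r by (simp add: a_def divide_pos_neg)
  have "?F t \<le> c * exp (- a * t)" for t
  proof -
    consider "t < r" | "r \<le> t" "t < 0" | "0 \<le> t"
      by linarith
    then show ?thesis
    proof cases
      case 1
      \<comment> \<open>The slope \<open>a\<close> is chosen so that \<open>c exp(- a r) = e\<close>.\<close>
      have "- a * t = (1 - ln c) * (t / r)"
        using r by (simp add: a_def)
      moreover have "1 \<le> t / r"
        using 1 r by (simp add: le_divide_eq_1_neg)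
      ultimately have "1 - ln c \<le> - a * t"
        using mult_left_mono [of 1 "t / r" "1 - ln c"] \<open>ln c \<le> 0\<close> by simp
      then have "c * exp (1 - ln c) \<le> c * exp (- a * t)"
        using \<open>0 < c\<close> by simp
      moreover have "c * exp (1 - ln c) = exp 1" "1 \<le> exp (1::real)"
        using \<open>0 < c\<close> by (simp_all add: exp_diff)
      ultimately show ?thesis
        using prob_le_1 [of "{\<omega>\<in>space M. t \<le> Y \<omega>}"] by linarith
    next
      case 2
      then have "1 \<le> exp (- a * t)"
        using \<open>0 < a\<close> by (simp add: mult_nonneg_nonpos)
      then have "c \<le> c * exp (- a * t)"
        using \<open>0 < c\<close> by simp
      moreover have "?F t \<le> ?F r"
        using 2 by (intro tail_prob_antimono) auto
      ultimately show ?thesis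
        using r(1) by linarith
    next
      case 3
      then have "?F t \<le> ?F 0"
        by (intro tail_prob_antimono) auto
      then show ?thesis
        using null \<open>0 < c\<close> by (simp add: order_trans [OF _ less_imp_le])
    qed
  qed
  then show ?thesis
    using \<open>0 < a\<close> by blast
qed

lemma log_concave_tail_prob_le_exp_of_pos:
  fixes Y :: "'a \<Rightarrow> real"
  assumes [measurable]: "Y \<in> borel_measurable M"
    and lc: "log_concave_function (\<lambda>t. prob {\<omega>\<in>space M. t \<le> Y \<omega>})"
    and pos: "0 < prob {\<omega>\<in>space M. 0 \<le> Y \<omega>}" and "prob {\<omega>\<in>space M. 0 \<le> Y \<omega>} < c" "c \<le> 1"
  shows "\<exists>a>0. \<forall>t. prob {\<omega>\<in>space M. t \<le> Y \<omega>} \<le> c * exp (- a * t)"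
proof -
  let ?F = "\<lambda>t. prob {\<omega>\<in>space M. t \<le> Y \<omega>}"
  define q where "q = ?F 0"
  have "eventually (\<lambda>t. q < ?F t) at_bot"
    using order_tendstoD(1) [OF tail_prob_tendsto_at_bot [OF assms(1)], of q] assms(4,5)
    by (simp add: q_def)
  then obtain N where N: "\<And>t. t \<le> N \<Longrightarrow> q < ?F t"
    unfolding eventually_at_bot_linorder by blast
  define T where "T = min N (-1)"
  have T: "q < ?F T" "T < 0"
    using N by (simp_all add: T_def)
  have "eventually (\<lambda>t. ?F t < c) (at_left 0)"
    using order_tendstoD(2) [OF tail_measure_tendsto_at_left [OF assms(1), of 0], of c] assms(4)
    by simp
  moreover have "eventually (\<lambda>t. t \<in> {T<..<0}) (at_left 0)"
    by (rule eventually_at_left_real) (use T in simp)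
  ultimately obtain r where r: "?F r < c" "T < r" "r < 0"
    using eventually_happens' [OF trivial_limit_at_left_real eventually_conj] by fastforce
  define p where "p = ?F r"
  define a where "a = (ln p - ln q) / - r"
  have "q \<le> p"
    using r by (simp add: p_def q_def tail_prob_antimono)
  have secant: "?F t \<le> exp (ln q + - a * t)" if "t \<notin> {r<..<0}" for t
  proof -
    have "ln q + (t - 0) * (ln q - ln p) / (0 - r) = ln q + - a * t"
      using r by (simp add: a_def field_simps)
    then show ?thesis
      using log_concave_function_le_secant [OF lc \<open>r < 0\<close>, of t] pos \<open>q \<le> p\<close> that
      unfolding q_def [symmetric] p_def [symmetric] by simp
  qed
  \<comment> \<open>Otherwise the secant through \<open>r\<close> and \<open>0\<close> would be flat, forcing \<open>F T \<le> q\<close>.\<close>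
  have "q < p"
  proof (rule ccontr)
    assume "\<not> q < p"
    then have "?F T \<le> q"
      using secant [of T] \<open>q \<le> p\<close> T r pos by (simp add: a_def q_def)
    then show False
      using T by simp
  qed
  have "0 < a"
    using \<open>q < p\<close> pos r by (simp add: a_def q_def divide_pos_neg)
  have "?F t \<le> p * exp (- a * t)" for t
  proof (cases "t \<in> {r<..<0}")
    case True
    then have "?F t \<le> p"
      by (simp add: p_def tail_prob_antimono)
    also have "\<dots> \<le> p * exp (- a * t)"
      using True \<open>0 < a\<close> \<open>q < p\<close> pos by (simp add: q_def mult_nonneg_nonpos)
    finally show ?thesis .
  next
    case False
    have "?F t \<le> exp (ln q + - a * t)"
      using secant [OF False] .
    also have "\<dots> = q * exp (- a * t)"
      using pos by (subst exp_add) (simp add: q_def)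
    also have "\<dots> \<le> p * exp (- a * t)"
      using \<open>q \<le> p\<close> by simp
    finally show ?thesis .
  qed
  moreover have "p * exp (- a * t) \<le> c * exp (- a * t)" for t
    using r(1) by (simp add: p_def)
  ultimately have "?F t \<le> c * exp (- a * t)" for t
    by (meson order_trans)
  then show ?thesis
    using \<open>0 < a\<close> by blast
qed

lemma log_concave_tail_prob_le_exp:
  fixes Y :: "'a \<Rightarrow> real"
  assumes [measurable]: "Y \<in> borel_measurable M"
    and "log_concave_function (\<lambda>t. prob {\<omega>\<in>space M. t \<le> Y \<omega>})"
    and "prob {\<omega>\<in>space M. 0 \<le> Y \<omega>} < c" "c \<le> 1"
  shows "\<exists>a>0. \<forall>t. prob {\<omega>\<in>space M. t \<le> Y \<omega>} \<le> c * exp (- a * t)"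
proof (cases "prob {\<omega>\<in>space M. 0 \<le> Y \<omega>} = 0")
  case True
  then show ?thesis
    using assms by (intro tail_prob_le_exp_of_null) auto
next
  case False
  then show ?thesis
    using assms by (intro log_concave_tail_prob_le_exp_of_pos) (auto simp: zero_less_measure_iff)
qed

end

section \<open>Lower bounds for the Cramer transform\<close>

lemma log_concave_function_halfspace_measure:
  fixes M :: "'a::euclidean_space measure"
  assumes "sets M = sets borel" and "log_concave_measure M" and "u \<noteq> 0"
  shows "log_concave_function (\<lambda>t. measure M {y\<in>space M. t \<le> u \<bullet> y - r})"
  unfolding log_concave_function_def
proof (intro allI impI)
  fix a b l :: real assume "0 < l" "l < 1"
  define H where "H t = {y. t \<le> u \<bullet> y - r}" for t
  have borel: "H t \<in> sets borel" for t
    unfolding H_def by measurable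
  have minkowski: "{(1 - l) *\<^sub>R y + l *\<^sub>R z | y z. y \<in> H a \<and> z \<in> H b} = H ((1 - l) * a + l * b)"
  proof (intro equalityI subsetI)
    fix w assume "w \<in> {(1 - l) *\<^sub>R y + l *\<^sub>R z | y z. y \<in> H a \<and> z \<in> H b}"
    then obtain y z where w: "w = (1 - l) *\<^sub>R y + l *\<^sub>R z" and "y \<in> H a" "z \<in> H b"
      by blast
    have "(1 - l) * a + l * b \<le> (1 - l) * (u \<bullet> y - r) + l * (u \<bullet> z - r)"
      using \<open>y \<in> H a\<close> \<open>z \<in> H b\<close> \<open>0 < l\<close> \<open>l < 1\<close>
      by (intro add_mono mult_left_mono) (auto simp: H_def)
    also have "\<dots> = u \<bullet> w - r"
      unfolding w by (simp add: inner_add_right algebra_simps)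
    finally show "w \<in> H ((1 - l) * a + l * b)"
      by (simp add: H_def)
  next
    fix w assume w: "w \<in> H ((1 - l) * a + l * b)"
    \<comment> \<open>Move \<open>w\<close> along \<open>u\<close> to the two parallel hyperplanes.\<close>
    define v where "v = u /\<^sub>R (u \<bullet> u)"
    have "u \<bullet> v = 1"
      using \<open>u \<noteq> 0\<close> by (simp add: v_def)
    define d where "d = (1 - l) * a + l * b"
    have "w + (a - d) *\<^sub>R v \<in> H a" "w + (b - d) *\<^sub>R v \<in> H b"
      using w \<open>u \<bullet> v = 1\<close> by (simp_all add: H_def d_def inner_add_right)
    moreover have "w = (1 - l) *\<^sub>R (w + (a - d) *\<^sub>R v) + l *\<^sub>R (w + (b - d) *\<^sub>R v)"
    proof -
      have "(1 - l) * (a - d) + l * (b - d) = 0"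
        by (simp add: d_def algebra_simps)
      moreover have "(1 - l) *\<^sub>R (w + (a - d) *\<^sub>R v) + l *\<^sub>R (w + (b - d) *\<^sub>R v)
          = w + ((1 - l) * (a - d) + l * (b - d)) *\<^sub>R v"
        by (simp add: algebra_simps)
      ultimately show ?thesis
        by simp
    qed
    ultimately show "w \<in> {(1 - l) *\<^sub>R y + l *\<^sub>R z | y z. y \<in> H a \<and> z \<in> H b}"
      by blast
  qed
  have "measure M (H a) powr (1 - l) * measure M (H b) powr l
      \<le> measure (completion M) (H ((1 - l) * a + l * b))"
    using assms(2) borel \<open>0 < l\<close> \<open>l < 1\<close> unfolding log_concave_measure_def minkowski [symmetric]
    by blast
  also have "\<dots> = measure M (H ((1 - l) * a + l * b))"
    using assms(1) borel by (intro measure_completion) simp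
  finally show "measure M {y\<in>space M. a \<le> u \<bullet> y - r} powr (1 - l) * measure M {y\<in>space M. b \<le> u \<bullet> y - r} powr l
      \<le> measure M {y\<in>space M. (1 - l) * a + l * b \<le> u \<bullet> y - r}"
    using sets_eq_imp_space_eq [OF assms(1)] by (simp add: H_def)
qed

lemma cramer_nonneg:
  fixes M :: "'a::euclidean_space measure"
  assumes "prob_space M"
  shows "0 \<le> cramer M x"
proof -
  interpret prob_space M by fact
  have "(\<integral>\<^sup>+ y. ennreal (exp (0 \<bullet> y)) \<partial>M) = 1"
    by (simp add: emeasure_space_1)
  then have "cgf M 0 = 0"
    unfolding cgf_def Let_def by simp
  have "ereal (x \<bullet> 0) - cgf M 0 \<le> cramer M x"
    unfolding cramer_def by (rule SUP_upper) simp
  then show ?thesis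
    using \<open>cgf M 0 = 0\<close> by (simp add: zero_ereal_def)
qed

lemma cramer_ge_of_nn_integral_le:
  fixes M :: "'a::euclidean_space measure"
  assumes "prob_space M" and "sets M = sets borel"
    and bound: "(\<integral>\<^sup>+ y. ennreal (exp (\<xi> \<bullet> y - \<xi> \<bullet> x)) \<partial>M) \<le> ennreal B" and "0 < B"
  shows "ereal (- ln B) \<le> cramer M x"
proof -
  interpret prob_space M by fact
  have meas [measurable]: "(\<lambda>y. ennreal (exp (\<xi> \<bullet> y - \<xi> \<bullet> x))) \<in> borel_measurable M"
    "(\<lambda>y. ennreal (exp (\<xi> \<bullet> y))) \<in> borel_measurable M"
    unfolding measurable_cong_sets [OF assms(2) refl] by measurable
  define I where "I = (\<integral>\<^sup>+ y. ennreal (exp (\<xi> \<bullet> y)) \<partial>M)"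
  have "I = (\<integral>\<^sup>+ y. ennreal (exp (\<xi> \<bullet> y - \<xi> \<bullet> x)) * ennreal (exp (\<xi> \<bullet> x)) \<partial>M)"
    unfolding I_def by (intro nn_integral_cong) (simp add: exp_diff flip: ennreal_mult)
  also have "\<dots> = (\<integral>\<^sup>+ y. ennreal (exp (\<xi> \<bullet> y - \<xi> \<bullet> x)) \<partial>M) * ennreal (exp (\<xi> \<bullet> x))"
    by (rule nn_integral_multc) measurable
  also have "\<dots> \<le> ennreal (B * exp (\<xi> \<bullet> x))"
    using bound \<open>0 < B\<close> by (simp add: ennreal_mult mult_right_mono)
  finally have I_le: "I \<le> ennreal (B * exp (\<xi> \<bullet> x))" .
  have "I \<noteq> 0"
  proof
    assume "I = 0"
    then have "AE y in M. ennreal (exp (\<xi> \<bullet> y)) = 0"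
      using nn_integral_0_iff_AE [OF meas(2)] by (simp add: I_def)
    then show False
      by simp
  qed
  moreover have "I < \<infinity>"
    using I_le by (simp add: le_less_trans)
  ultimately have "cgf M \<xi> = ereal (ln (enn2real I))" "0 < enn2real I"
    by (auto simp: cgf_def I_def Let_def enn2real_positive_iff zero_less_iff_neq_zero)
  moreover have "enn2real I \<le> B * exp (\<xi> \<bullet> x)"
    using I_le \<open>0 < B\<close> by (simp add: enn2real_leI)
  ultimately have "ln (enn2real I) \<le> ln (B * exp (\<xi> \<bullet> x))"
    by simp
  also have "\<dots> = ln B + \<xi> \<bullet> x"
    using \<open>0 < B\<close> by (simp add: ln_mult)
  finally have "ereal (- ln B) \<le> ereal (x \<bullet> \<xi>) - cgf M \<xi>"
    using \<open>cgf M \<xi> = ereal (ln (enn2real I))\<close> by (simp add: inner_commute)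
  also have "\<dots> \<le> cramer M x"
    unfolding cramer_def by (rule SUP_upper) simp
  finally show ?thesis .
qed

lemma cramer_ge_of_halfspace_measure_less:
  fixes M :: "'a::euclidean_space measure"
  assumes "prob_space M" and "sets M = sets borel" and "log_concave_measure M"
    and "u \<noteq> 0" and "0 < \<epsilon>" and "\<epsilon> < 1"
    and halfspace: "measure M {y. u \<bullet> x \<le> u \<bullet> y} < c"
  shows "ereal ((1 - \<epsilon>) * ln (1 / c) + ln \<epsilon>) \<le> cramer M x"
proof -
  interpret prob_space M by fact
  have "0 < c"
    using halfspace measure_nonneg le_less_trans by blast
  show ?thesis
  proof (cases "c \<le> 1")
    case False
    then have "0 < (1 - \<epsilon>) * ln c" "ln \<epsilon> < 0"
      using \<open>0 < \<epsilon>\<close> \<open>\<epsilon> < 1\<close> by simp_all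
    then have "(1 - \<epsilon>) * ln (1 / c) + ln \<epsilon> < 0"
      using \<open>0 < c\<close> by (simp add: ln_div)
    then have "ereal ((1 - \<epsilon>) * ln (1 / c) + ln \<epsilon>) \<le> 0"
      by simp
    then show ?thesis
      using cramer_nonneg [OF assms(1)] by (rule order_trans)
  next
    case True
    define Y where "Y y = u \<bullet> y - u \<bullet> x" for y
    have Y_measurable [measurable]: "Y \<in> borel_measurable M"
      unfolding measurable_cong_sets [OF assms(2) refl] Y_def by measurable
    have "prob {y\<in>space M. 0 \<le> Y y} < c"
      using halfspace sets_eq_imp_space_eq [OF assms(2)] by (simp add: Y_def)
    moreover have "log_concave_function (\<lambda>t. prob {y\<in>space M. t \<le> Y y})"
      using log_concave_function_halfspace_measure [OF assms(2-4), of "u \<bullet> x"] by (simp add: Y_def)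
    ultimately obtain a where "0 < a" and "\<forall>t. prob {y\<in>space M. t \<le> Y y} \<le> c * exp (- a * t)"
      using log_concave_tail_prob_le_exp [OF Y_measurable _ _ True] by blast
    then have tail: "prob {y\<in>space M. t \<le> Y y} \<le> c * exp (- a * t)" for t
      by blast
    define \<xi> where "\<xi> = ((1 - \<epsilon>) * a) *\<^sub>R u"
    have "(\<integral>\<^sup>+ y. ennreal (exp (\<xi> \<bullet> y - \<xi> \<bullet> x)) \<partial>M) = (\<integral>\<^sup>+ y. ennreal (exp ((1 - \<epsilon>) * a * Y y)) \<partial>M)"
      by (simp add: \<xi>_def Y_def algebra_simps)
    also have "\<dots> \<le> ennreal (c powr (1 - \<epsilon>) / \<epsilon>)"
      using mgf_le_of_tail_le_exp [OF assms(1) _ \<open>0 < a\<close> \<open>0 < c\<close> \<open>0 < \<epsilon>\<close> \<open>\<epsilon> < 1\<close> tail] by simp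
    finally have "ereal (- ln (c powr (1 - \<epsilon>) / \<epsilon>)) \<le> cramer M x"
      using \<open>0 < c\<close> \<open>0 < \<epsilon>\<close> by (intro cramer_ge_of_nn_integral_le [OF assms(1,2)]) auto
    moreover have "- ln (c powr (1 - \<epsilon>) / \<epsilon>) = (1 - \<epsilon>) * ln (1 / c) + ln \<epsilon>"
      using \<open>0 < c\<close> \<open>0 < \<epsilon>\<close> by (simp add: ln_div)
    ultimately show ?thesis
      by simp
  qed
qed

lemma cramer_ge_of_tukey_depth_less:
  fixes M :: "'a::euclidean_space measure"
  assumes "prob_space M" and "sets M = sets borel" and "log_concave_measure M"
    and "0 < \<epsilon>" and "\<epsilon> < 1" and "tukey_depth M x < c"
  shows "ereal ((1 - \<epsilon>) * ln (1 / c) + ln \<epsilon>) \<le> cramer M x"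
proof -
  have "sphere (0::'a) 1 \<noteq> {}"
    by simp
  moreover have "bdd_below ((\<lambda>\<xi>. measure M {y. \<xi> \<bullet> x \<le> \<xi> \<bullet> y}) ` sphere 0 1)"
    by (intro bdd_belowI2 [of _ 0]) simp
  ultimately obtain u :: 'a where "u \<in> sphere 0 1" "measure M {y. u \<bullet> x \<le> u \<bullet> y} < c"
    using assms(6) unfolding tukey_depth_def by (subst (asm) cINF_less_iff) auto
  moreover have "u \<noteq> 0"
    using \<open>u \<in> sphere 0 1\<close> by auto
  ultimately show ?thesis
    using cramer_ge_of_halfspace_measure_less [OF assms(1-3) _ assms(4,5)] by blast
qed

lemma cramer_ge_tukey_depth:
  fixes M :: "'a::euclidean_space measure"
  assumes "prob_space M" and "sets M = sets borel" and "log_concave_measure M"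
    and "0 < \<epsilon>" and "\<epsilon> < 1"
  shows "ereal (1 - \<epsilon>) * (if tukey_depth M x = 0 then \<infinity> else ereal (ln (1 / tukey_depth M x)))
      + ereal (ln \<epsilon>) \<le> cramer M x"
proof -
  define q where "q = tukey_depth M x"
  note approx = cramer_ge_of_tukey_depth_less [OF assms, of x, folded q_def]
  have "0 \<le> q"
    unfolding q_def tukey_depth_def by (intro cINF_greatest) auto
  show ?thesis
  proof (cases "q = 0")
    case True
    have "ereal K \<le> cramer M x" for K
    proof -
      have "(1 - \<epsilon>) * ln (1 / exp ((ln \<epsilon> - K) / (1 - \<epsilon>))) + ln \<epsilon> = K"
        using \<open>\<epsilon> < 1\<close> by (simp add: ln_div)
      then show ?thesis
        using approx [of "exp ((ln \<epsilon> - K) / (1 - \<epsilon>))"] True by simp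
    qed
    then have "cramer M x = \<infinity>"
      by (rule ereal_top)
    then show ?thesis
      by simp
  next
    case False
    have "((\<lambda>c. ereal ((1 - \<epsilon>) * ln (1 / c) + ln \<epsilon>)) \<longlongrightarrow> ereal ((1 - \<epsilon>) * ln (1 / q) + ln \<epsilon>)) (at_right q)"
      using False \<open>0 \<le> q\<close> by (intro tendsto_intros) auto
    moreover have "eventually (\<lambda>c. ereal ((1 - \<epsilon>) * ln (1 / c) + ln \<epsilon>) \<le> cramer M x) (at_right q)"
      using eventually_at_right_less by (rule eventually_mono) (rule approx)
    ultimately have "ereal ((1 - \<epsilon>) * ln (1 / q) + ln \<epsilon>) \<le> cramer M x"
      by (rule tendsto_upperbound) (simp_all flip: trivial_limit_def)
    then show ?thesis
      using False by (simp add: q_def)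
  qed
qed

theorem theorem1p1:
  fixes M :: "'a::euclidean_space measure" and x :: 'a and \<epsilon> :: real
  assumes "prob_space M" and "sets M = sets borel"
    and "log_concave_measure M"
    and "0 < \<epsilon>" and "\<epsilon> < 1"
  shows "cramer M x \<ge>
           ereal (1 - \<epsilon>) * (if tukey_depth M x = 0 then \<infinity> else ereal (ln (1 / tukey_depth M x)))
           + ereal (ln (\<epsilon> / 2 powr (1 - \<epsilon>)))"
proof -
  have "ereal (ln (\<epsilon> / 2 powr (1 - \<epsilon>))) \<le> ereal (ln \<epsilon>)"
    using assms(4,5) by (simp add: ln_div)
  then show ?thesis
    by (rule order_trans [OF add_left_mono]) (rule cramer_ge_tukey_depth [OF assms])
qed

end
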